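(* Let $\alpha\in(0,2)$, $a>0$, and let $\sigma:\mathbb{R}^2\times[0,\infty)\to\mathbb{R}$ be a measurable function satisfying the boundedness condition: there is $C$ with $|\sigma(x,t)|\le C$ for all $t\ge0$, $x\in\mathbb{R}^2$. For $x,y\in\mathbb{R}^2$ and $t\ge0$ define \[ G(x,y,t)=\frac{1}{2\pi a}\int_0^{t-\frac{|x-y|}{a}}\frac{\sigma(y,\tau)}{\sqrt{a^2(t-\tau)^2-|y-x|^2}}\,d\tau\;\mathbf{1}_{\{|x-y|<at\}}. \] Then for every $t\ge0$ and $x\in\mathbb{R}^2$ the stochastic integral \[ U(x,t)=\iint_{\mathbb{R}^2}G(x,y,t)\,M(dy) \] with respect to a symmetric $\alpha$-stable random measure $M$ on $\mathbb{R}^2$ with Lebesgue control measure is well defined, i.e. $\iint_{\mathbb{R}^2}|G(x,y,t)|^\alpha\,dy<\infty$.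
   Context: An independently scattered symmetric $\alpha$-stable (S$\alpha$S) random measure $M$ on $\mathbb{R}^2$ with Lebesgue control measure is a random set function on Borel sets $A$ of finite Lebesgue measure $\lambda_2(A)$ such that $M(A)$ is S$\alpha$S with characteristic function $E e^{i\lambda M(A)}=e^{-\lambda_2(A)|\lambda|^\alpha}$, values on disjoint sets are independent, and $M$ is countably additive almost surely. For $f\in L^\alpha(\mathbb{R}^2)$, the integral $\iint f(x)M(dx)$ is defined as the limit in probability of integrals of simple compactly supported functions; it is well defined precisely for $f\in L^\alpha(\mathbb{R}^2)$. *)

theory Defs
  imports "HOL-Analysis.Analysis"
begin

definition Gker :: "real \<Rightarrow> (real^2 \<Rightarrow> real \<Rightarrow> real) \<Rightarrow> real^2 \<Rightarrow> real^2 \<Rightarrow> real \<Rightarrow> real" where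
  "Gker a \<sigma> x y t =
     (1 / (2 * pi * a)) *
     (LBINT \<tau>=0..(t - norm (x - y) / a).
        \<sigma> y \<tau> / sqrt (a\<^sup>2 * (t - \<tau>)\<^sup>2 - (norm (y - x))\<^sup>2))
     * indicator {p. norm (fst p - snd p) < a * t} (x, y)"

end

theory Submission
  imports Defs
begin

text \<open>For 0 < r = |x - y| < a t, writing a (t - \<tau>) = r + v gives
  a^2 (t - \<tau>)^2 - r^2 = v (v + 2 r) \<ge> 2 r v, so the \<tau>-integrand of G is at most
  C (2 r)^(-1/2) v^(-1/2). Since v^(-1/2) is integrable at v = 0, this yields
  |G(x,y,t)| \<le> K |x - y|^(-1/2) with K independent of y. As G vanishes for |x - y| \<ge> a t,
  |G|^\<alpha> is dominated by |x - y|^(-\<alpha>/2) on a disc, which is integrable in the plane because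
  \<alpha>/2 < 2. Both integrability facts are instances of one estimate: the integral of d^(-\<beta>)
  over {0 < d \<le> R} is finite when \<mu>{0 < d \<le> \<rho>} \<le> K \<rho>^\<gamma> and \<beta> < \<gamma>, by summing over
  the dyadic shells R/2^(k+1) < d \<le> R/2^k.\<close>

lemma ex_dyadic_shell:
  fixes v R :: real
  assumes "0 < v" "v \<le> R"
  obtains k :: nat where "R / 2^Suc k < v" "v \<le> R / 2^k"
proof -
  obtain n where "R / v < 2^n"
    using real_arch_pow[of 2 "R / v"] by auto
  then have "R / 2^n < v"
    using assms by (simp add: divide_less_eq mult.commute)
  then obtain k where "\<forall>i\<le>k. \<not> R / 2^i < v" "R / 2^Suc k < v"
    using ex_least_nat_less[of "\<lambda>n. R / 2^n < v"] assms by auto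
  then show ?thesis
    using that by (auto simp: not_less)
qed

lemma dyadic_powr_scaling:
  fixes R \<beta> \<gamma> K :: real
  assumes "0 < R"
  shows "(R / 2^Suc k) powr -\<beta> * (K * (R / 2^k) powr \<gamma>) = K * 2 powr \<beta> * R powr (\<gamma> - \<beta>) * (2 powr (\<beta> - \<gamma>))^k"
proof -
  have pow2: "(2::real)^n = 2 powr real n" for n
    by (simp add: powr_realpow)
  have c: "(R / 2^Suc k) powr -\<beta> = R powr -\<beta> * 2 powr (\<beta> * (k+1))"
    unfolding pow2 using assms by (simp add: powr_divide powr_powr powr_minus divide_simps mult.commute)
  have r: "(R / 2^k) powr \<gamma> = R powr \<gamma> * 2 powr (- \<gamma> * k)"
    unfolding pow2 using assms by (simp add: powr_divide powr_powr powr_minus divide_simps mult.commute)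
  have qk: "(2 powr (\<beta> - \<gamma>))^k = 2 powr ((\<beta> - \<gamma>) * k)"
    by (simp add: powr_realpow[symmetric] powr_powr)
  have "R powr (\<gamma> - \<beta>) = R powr -\<beta> * R powr \<gamma>"
    by (simp add: powr_add[symmetric])
  moreover have "2 powr (\<beta> * (k+1)) * 2 powr (- \<gamma> * k) = 2 powr \<beta> * 2 powr ((\<beta> - \<gamma>) * k)"
    by (simp add: powr_add[symmetric] algebra_simps)
  ultimately show ?thesis
    unfolding c r qk by (simp add: algebra_simps)
qed

lemma nn_integral_neg_powr_le_of_distribution:
  fixes d :: "'a \<Rightarrow> real"
  assumes \<beta>: "0 \<le> \<beta>" "\<beta> < \<gamma>" and R: "0 < R" and K: "0 \<le> K"
    and [measurable]: "d \<in> borel_measurable M"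
    and distr: "\<And>\<rho>. 0 < \<rho> \<Longrightarrow> \<rho> \<le> R \<Longrightarrow>
      emeasure M {y\<in>space M. 0 < d y \<and> d y \<le> \<rho>} \<le> ennreal (K * \<rho> powr \<gamma>)"
  shows "(\<integral>\<^sup>+y. ennreal (if 0 < d y \<and> d y \<le> R then d y powr -\<beta> else 0) \<partial>M)
    \<le> ennreal (K * 2 powr \<beta> * R powr (\<gamma> - \<beta>) / (1 - 2 powr (\<beta> - \<gamma>)))"
proof -
  define E where "E k = {y\<in>space M. 0 < d y \<and> d y \<le> R / 2^k}" for k :: nat
  define c where "c k = (R / 2^Suc k) powr -\<beta>" for k :: nat
  define q :: real where "q = 2 powr (\<beta> - \<gamma>)"
  have [measurable]: "E k \<in> sets M" for k
    unfolding E_def by measurable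
  have q: "0 \<le> q" "q < 1"
    using \<beta> powr_less_mono[of "\<beta> - \<gamma>" 0 2] by (auto simp: q_def)
  have cover: "ennreal (if 0 < d y \<and> d y \<le> R then d y powr -\<beta> else 0)
      \<le> (\<Sum>k. ennreal (c k) * indicator (E k) y)" if "y \<in> space M" for y
  proof (cases "0 < d y \<and> d y \<le> R")
    case True
    then obtain k where k: "R / 2^Suc k < d y" "d y \<le> R / 2^k"
      by (auto elim: ex_dyadic_shell)
    then have "ennreal (d y powr -\<beta>) \<le> ennreal (c k) * indicator (E k) y"
      using True that \<beta> R by (auto simp: E_def c_def intro!: ennreal_leI powr_mono2')
    also have "\<dots> \<le> (\<Sum>k. ennreal (c k) * indicator (E k) y)"
      using sum_le_suminf[OF summableI, of "{k}"] by simp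
    finally show ?thesis
      using True by simp
  qed auto
  have "(\<integral>\<^sup>+y. ennreal (if 0 < d y \<and> d y \<le> R then d y powr -\<beta> else 0) \<partial>M)
      \<le> (\<integral>\<^sup>+y. (\<Sum>k. ennreal (c k) * indicator (E k) y) \<partial>M)"
    by (intro nn_integral_mono cover)
  also have "\<dots> = (\<Sum>k. ennreal (c k) * emeasure M (E k))"
    by (subst nn_integral_suminf) (auto simp: nn_integral_cmult_indicator)
  also have "\<dots> \<le> (\<Sum>k. ennreal (K * 2 powr \<beta> * R powr (\<gamma> - \<beta>) * q^k))"
  proof (intro suminf_le summableI)
    fix k
    have "emeasure M (E k) \<le> ennreal (K * (R / 2^k) powr \<gamma>)"
      unfolding E_def using R by (intro distr) (auto simp: divide_le_eq)
    then have "ennreal (c k) * emeasure M (E k) \<le> ennreal (c k * (K * (R / 2^k) powr \<gamma>))"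
      using K by (simp add: c_def ennreal_mult mult_left_mono)
    then show "ennreal (c k) * emeasure M (E k) \<le> ennreal (K * 2 powr \<beta> * R powr (\<gamma> - \<beta>) * q^k)"
      unfolding c_def q_def dyadic_powr_scaling[OF R] .
  qed
  also have "\<dots> = ennreal (\<Sum>k. K * 2 powr \<beta> * R powr (\<gamma> - \<beta>) * q^k)"
    using K q by (intro suminf_ennreal2 summable_mult summable_geometric) auto
  also have "(\<Sum>k. K * 2 powr \<beta> * R powr (\<gamma> - \<beta>) * q^k) = K * 2 powr \<beta> * R powr (\<gamma> - \<beta>) / (1 - q)"
    using q by (simp add: suminf_mult suminf_geometric)
  finally show ?thesis
    by (simp add: q_def)
qed

lemma nn_integral_dist_neg_powr_le:
  fixes x :: "'a::euclidean_space" and \<beta> R :: real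
  assumes "0 \<le> \<beta>" "\<beta> < DIM('a)" "0 < R"
  shows "(\<integral>\<^sup>+y. ennreal (if 0 < dist x y \<and> dist x y \<le> R then dist x y powr -\<beta> else 0) \<partial>lborel)
    \<le> ennreal (unit_ball_vol DIM('a) * 2 powr \<beta> * R powr (DIM('a) - \<beta>) / (1 - 2 powr (\<beta> - DIM('a))))"
proof (rule nn_integral_neg_powr_le_of_distribution)
  fix \<rho> :: real assume "0 < \<rho>"
  have "emeasure lborel {y\<in>space lborel. 0 < dist x y \<and> dist x y \<le> \<rho>} \<le> emeasure lborel (cball x \<rho>)"
    by (intro emeasure_mono) auto
  also have "\<dots> = ennreal (unit_ball_vol DIM('a) * \<rho> powr DIM('a))"
    using \<open>0 < \<rho>\<close> by (simp add: emeasure_cball powr_realpow)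
  finally show "emeasure lborel {y\<in>space lborel. 0 < dist x y \<and> dist x y \<le> \<rho>}
      \<le> ennreal (unit_ball_vol DIM('a) * \<rho> powr DIM('a))" .
qed (use assms in auto)

lemma norm_integral_le_of_nn_integral_le:
  fixes f :: "'a \<Rightarrow> 'b::{banach, second_countable_topology}" and h :: "'a \<Rightarrow> real"
  assumes "\<And>x. norm (f x) \<le> c * h x" "0 \<le> c" "\<And>x. 0 \<le> h x" "h \<in> borel_measurable M"
    and "(\<integral>\<^sup>+ x. ennreal (h x) \<partial>M) \<le> ennreal B" "0 \<le> B"
  shows "norm (integral\<^sup>L M f) \<le> c * B"
proof -
  have "ennreal (norm (integral\<^sup>L M f)) \<le> (\<integral>\<^sup>+ x. ennreal (norm (f x)) \<partial>M)"
    by (cases "integrable M f") (simp_all add: integral_norm_bound_ennreal not_integrable_integral_eq)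
  also have "\<dots> \<le> (\<integral>\<^sup>+ x. ennreal c * ennreal (h x) \<partial>M)"
    using assms by (intro nn_integral_mono) (simp add: ennreal_mult[symmetric] ennreal_leI)
  also have "\<dots> = ennreal c * (\<integral>\<^sup>+ x. ennreal (h x) \<partial>M)"
    using assms(4) by (simp add: nn_integral_cmult)
  also have "\<dots> \<le> ennreal c * ennreal B"
    using assms(5) by (rule mult_left_mono) simp
  finally show ?thesis
    using assms by (simp add: ennreal_mult[symmetric])
qed

lemma abs_div_sqrt_diff_squares_le:
  fixes c C r s :: real
  assumes "\<bar>c\<bar> \<le> C" "0 < r" "r < s"
  shows "\<bar>c / sqrt (s\<^sup>2 - r\<^sup>2)\<bar> \<le> C / sqrt (2 * r) * (s - r) powr -(1/2)"
proof -
  have "2 * r * (s - r) \<le> (s + r) * (s - r)"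
    using assms by (intro mult_right_mono) auto
  then have "sqrt (2 * r * (s - r)) \<le> sqrt (s\<^sup>2 - r\<^sup>2)"
    by (simp add: power2_eq_square algebra_simps)
  moreover have "0 < sqrt (2 * r * (s - r))"
    using assms by simp
  ultimately have "\<bar>c / sqrt (s\<^sup>2 - r\<^sup>2)\<bar> \<le> C / sqrt (2 * r * (s - r))"
    using assms by (simp add: abs_div) (intro frac_le, auto)
  also have "\<dots> = C / sqrt (2 * r) * (s - r) powr -(1/2)"
    using assms by (simp add: real_sqrt_mult powr_minus powr_half_sqrt divide_simps)
  finally show ?thesis .
qed

lemma Gker_eq_0:
  assumes "a * t \<le> dist x y"
  shows "Gker a \<sigma> x y t = 0"
  using assms by (simp add: Gker_def dist_norm)

lemma Gker_eq_interval_integral: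
  assumes "0 < a" "dist x y < a * t"
  shows "Gker a \<sigma> x y t = 1 / (2 * pi * a) *
    (LINT \<tau>|lborel. indicator {0<..<t - dist x y / a} \<tau> *
       (\<sigma> y \<tau> / sqrt (a\<^sup>2 * (t - \<tau>)\<^sup>2 - (dist x y)\<^sup>2)))"
proof -
  have "einterval 0 (ereal (t - dist x y / a)) = {0<..<t - dist x y / a}"
    by (metis einterval_eq_Icc zero_ereal_def)
  then show ?thesis
    using assms
    by (simp add: Gker_def dist_norm norm_minus_commute interval_lebesgue_integral_def
        set_lebesgue_integral_def field_simps)
qed

lemma Gker_measurable:
  fixes a t :: real and \<sigma> :: "real^2 \<Rightarrow> real \<Rightarrow> real" and x :: "real^2"
  assumes a: "0 < a"
    and \<sigma>: "(\<lambda>p. \<sigma> (fst p) (snd p)) \<in> borel_measurable (restrict_space borel (UNIV \<times> {0..}))"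
  shows "(\<lambda>y. Gker a \<sigma> x y t) \<in> borel_measurable lborel"
proof -
  define g where "g p = indicator (UNIV \<times> {0..}) p * \<sigma> (fst p) (snd p)" for p :: "(real^2) \<times> real"
  have "UNIV \<times> {0..} \<in> sets (borel :: ((real^2) \<times> real) measure)"
    by (intro borel_closed closed_Times) auto
  then have "g \<in> borel_measurable borel"
    using \<sigma> unfolding g_def by (subst (asm) borel_measurable_restrict_space_iff) auto
  then have [measurable]: "g \<in> borel_measurable (lborel \<Otimes>\<^sub>M lborel)"
    unfolding lborel_prod by simp
  define F where "F y \<tau> = indicator {p. dist x (fst p) < a * t \<and> 0 < snd p \<and> snd p < t - dist x (fst p) / a} (y, \<tau>)
       * (g (y, \<tau>) / sqrt (a\<^sup>2 * (t - \<tau>)\<^sup>2 - (dist x y)\<^sup>2))" for y \<tau>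
  have "case_prod F \<in> borel_measurable (lborel \<Otimes>\<^sub>M lborel)"
    unfolding F_def case_prod_beta' by measurable
  moreover have "Gker a \<sigma> x y t = 1 / (2 * pi * a) * (LINT \<tau>|lborel. F y \<tau>)" for y
  proof (cases "dist x y < a * t")
    case True
    have "(LINT \<tau>|lborel. F y \<tau>) = (LINT \<tau>|lborel. indicator {0<..<t - dist x y / a} \<tau> *
        (\<sigma> y \<tau> / sqrt (a\<^sup>2 * (t - \<tau>)\<^sup>2 - (dist x y)\<^sup>2)))"
      using True by (intro Bochner_Integration.integral_cong) (auto simp: F_def g_def indicator_def)
    then show ?thesis
      using Gker_eq_interval_integral[OF a True] by simp
  next
    case False
    then show ?thesis
      by (simp add: Gker_eq_0 F_def)
  qed
  ultimately show ?thesis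
    using lborel.borel_measurable_lebesgue_integral by (simp, measurable)
qed

lemma Gker_integrand_le:
  fixes a t r C :: real
  assumes a: "0 < a" and \<sigma>: "\<forall>\<tau>\<ge>0. \<bar>\<sigma> \<tau>\<bar> \<le> C" and r: "0 < r"
  defines "U \<equiv> t - r / a"
  shows "\<bar>indicator {0<..<U} \<tau> * (\<sigma> \<tau> / sqrt (a\<^sup>2 * (t - \<tau>)\<^sup>2 - r\<^sup>2))\<bar>
    \<le> C / sqrt (2 * a * r) * (if 0 < dist U \<tau> \<and> dist U \<tau> \<le> t then dist U \<tau> powr -(1/2) else 0)"
proof (cases "0 < \<tau> \<and> \<tau> < U")
  case True
  have "a * (t - \<tau>) - r = a * (U - \<tau>)"
    using a by (simp add: U_def field_simps)
  moreover have "r < a * (t - \<tau>)"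
    using True a by (simp add: U_def field_simps)
  ultimately have "\<bar>\<sigma> \<tau> / sqrt ((a * (t - \<tau>))\<^sup>2 - r\<^sup>2)\<bar> \<le> C / sqrt (2 * r) * (a * (U - \<tau>)) powr -(1/2)"
    using abs_div_sqrt_diff_squares_le[of "\<sigma> \<tau>" C r "a * (t - \<tau>)"] \<sigma> True r by simp
  also have "\<dots> = C / sqrt (2 * a * r) * (U - \<tau>) powr -(1/2)"
    using True a r by (simp add: powr_mult powr_minus powr_half_sqrt real_sqrt_mult divide_simps)
  moreover have "U \<le> t"
    using a r by (simp add: U_def)
  ultimately show ?thesis
    using True by (simp add: dist_real_def power_mult_distrib)
next
  case False
  have "0 \<le> C"
    using \<sigma> abs_ge_zero order_trans by blast
  with False a r show ?thesis
    by simp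
qed

lemma Gker_bound:
  fixes a t C :: real and \<sigma> :: "real^2 \<Rightarrow> real \<Rightarrow> real" and x :: "real^2"
  assumes a: "0 < a" and \<sigma>: "\<forall>x t. t \<ge> 0 \<longrightarrow> \<bar>\<sigma> x t\<bar> \<le> C"
  shows "\<exists>K\<ge>0. \<forall>y. 0 < dist x y \<longrightarrow> \<bar>Gker a \<sigma> x y t\<bar> \<le> K * dist x y powr -(1/2)"
proof -
  define B where "B = unit_ball_vol 1 * 2 powr (1/2) * t powr (1 - 1/2) / (1 - 2 powr (1/2 - 1))"
  have "(2::real) powr (1/2 - 1) < 2 powr 0"
    by (intro powr_less_mono) auto
  then have "0 \<le> B"
    by (simp add: B_def)
  have "0 \<le> C"
    using \<sigma> abs_ge_zero order_trans by blast
  define K where "K = 1 / (2 * pi * a) * (C / sqrt (2 * a)) * B"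
  have "\<bar>Gker a \<sigma> x y t\<bar> \<le> K * dist x y powr -(1/2)" if "0 < dist x y" for y
  proof (cases "dist x y < a * t")
    case True
    define r where "r = dist x y"
    define U where "U = t - r / a"
    define f where "f \<tau> = indicator {0<..<U} \<tau> * (\<sigma> y \<tau> / sqrt (a\<^sup>2 * (t - \<tau>)\<^sup>2 - r\<^sup>2))" for \<tau>
    have "0 < r" "0 < U" "U \<le> t"
      using True \<open>0 < dist x y\<close> a by (auto simp: U_def r_def field_simps)
    have int_le: "norm (LINT \<tau>|lborel. f \<tau>) \<le> C / sqrt (2 * a * r) * B"
    proof (rule norm_integral_le_of_nn_integral_le)
      show "norm (f \<tau>) \<le> C / sqrt (2 * a * r) *
          (if 0 < dist U \<tau> \<and> dist U \<tau> \<le> t then dist U \<tau> powr -(1/2) else 0)" for \<tau>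
        unfolding f_def U_def using Gker_integrand_le[of a "\<sigma> y" C r] a \<sigma> \<open>0 < r\<close> by simp
      show "(\<integral>\<^sup>+ \<tau>. ennreal (if 0 < dist U \<tau> \<and> dist U \<tau> \<le> t then dist U \<tau> powr -(1/2) else 0) \<partial>lborel)
          \<le> ennreal B"
        unfolding B_def using nn_integral_dist_neg_powr_le[of "1/2" t U] \<open>0 < U\<close> \<open>U \<le> t\<close> by simp
    qed (use \<open>0 \<le> C\<close> \<open>0 \<le> B\<close> a \<open>0 < r\<close> in auto)
    have "\<bar>Gker a \<sigma> x y t\<bar> = 1 / (2 * pi * a) * norm (LINT \<tau>|lborel. f \<tau>)"
      using Gker_eq_interval_integral[OF a True] a by (simp add: f_def r_def U_def abs_mult)
    also have "\<dots> \<le> 1 / (2 * pi * a) * (C / sqrt (2 * a * r) * B)"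
      using int_le a by (intro mult_left_mono) auto
    also have "\<dots> = K * dist x y powr -(1/2)"
      using a \<open>0 < r\<close> by (simp add: K_def r_def powr_minus powr_half_sqrt real_sqrt_mult field_simps)
    finally show ?thesis .
  qed (use a \<open>0 \<le> C\<close> \<open>0 \<le> B\<close> in \<open>simp add: Gker_eq_0 K_def\<close>)
  moreover have "0 \<le> K"
    using a \<open>0 \<le> C\<close> \<open>0 \<le> B\<close> by (simp add: K_def)
  ultimately show ?thesis
    by blast
qed

lemma Gker_powr_le:
  fixes x y :: "real^2" and K \<alpha> :: real
  assumes "0 \<le> K" "0 < \<alpha>" "y \<noteq> x"
    and K: "\<forall>y. 0 < dist x y \<longrightarrow> \<bar>Gker a \<sigma> x y t\<bar> \<le> K * dist x y powr -(1/2)"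
  shows "ennreal (\<bar>Gker a \<sigma> x y t\<bar> powr \<alpha>) \<le> ennreal (K powr \<alpha>) *
    ennreal (if 0 < dist x y \<and> dist x y \<le> a * t + 1 then dist x y powr -(\<alpha>/2) else 0)"
proof (cases "dist x y < a * t")
  case True
  have "\<bar>Gker a \<sigma> x y t\<bar> powr \<alpha> \<le> (K * dist x y powr -(1/2)) powr \<alpha>"
    using K assms by (intro powr_mono2) auto
  also have "\<dots> = K powr \<alpha> * dist x y powr -(\<alpha>/2)"
    using \<open>0 \<le> K\<close> by (simp add: powr_mult powr_powr)
  finally show ?thesis
    using True assms by (simp add: ennreal_mult[symmetric] ennreal_leI)
qed (simp add: Gker_eq_0 assms)

theorem theorem1:
  fixes \<alpha> a C :: real and \<sigma> :: "real^2 \<Rightarrow> real \<Rightarrow> real"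
  assumes "0 < \<alpha>" "\<alpha> < 2" "0 < a"
    and "(\<lambda>p. \<sigma> (fst p) (snd p)) \<in> borel_measurable (restrict_space borel (UNIV \<times> {0..}))"
    and "\<forall>x t. t \<ge> 0 \<longrightarrow> \<bar>\<sigma> x t\<bar> \<le> C"
  shows "\<forall>t \<ge> 0. \<forall>x :: real^2.
           (\<lambda>y. Gker a \<sigma> x y t) \<in> borel_measurable lborel \<and>
           (\<integral>\<^sup>+ y. ennreal (\<bar>Gker a \<sigma> x y t\<bar> powr \<alpha>) \<partial>lborel) < \<infinity>"
proof (intro allI impI conjI)
  fix t :: real and x :: "real^2" assume "t \<ge> 0"
  show "(\<lambda>y. Gker a \<sigma> x y t) \<in> borel_measurable lborel"
    using assms by (intro Gker_measurable) auto
  obtain K where "0 \<le> K" and K: "\<forall>y. 0 < dist x y \<longrightarrow> \<bar>Gker a \<sigma> x y t\<bar> \<le> K * dist x y powr -(1/2)"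
    using Gker_bound assms by blast
  have "(\<integral>\<^sup>+ y. ennreal (\<bar>Gker a \<sigma> x y t\<bar> powr \<alpha>) \<partial>lborel) \<le> (\<integral>\<^sup>+ y. ennreal (K powr \<alpha>) *
      ennreal (if 0 < dist x y \<and> dist x y \<le> a * t + 1 then dist x y powr -(\<alpha>/2) else 0) \<partial>lborel)"
    using AE_lborel_singleton[of x]
  proof (rule nn_integral_mono_AE[OF eventually_mono])
    show "ennreal (\<bar>Gker a \<sigma> x y t\<bar> powr \<alpha>) \<le> ennreal (K powr \<alpha>) *
      ennreal (if 0 < dist x y \<and> dist x y \<le> a * t + 1 then dist x y powr -(\<alpha>/2) else 0)"
      if "y \<noteq> x" for y
      using Gker_powr_le[OF \<open>0 \<le> K\<close> _ that K] assms by blast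
  qed
  also have "\<dots> = ennreal (K powr \<alpha>) * (\<integral>\<^sup>+ y.
      ennreal (if 0 < dist x y \<and> dist x y \<le> a * t + 1 then dist x y powr -(\<alpha>/2) else 0) \<partial>lborel)"
    by (subst nn_integral_cmult) auto
  also have "\<dots> < \<infinity>"
    using nn_integral_dist_neg_powr_le[of "\<alpha>/2" "a * t + 1" x] assms \<open>t \<ge> 0\<close>
    by (simp add: ennreal_mult_less_top le_less_trans[OF _ ennreal_less_top] add_nonneg_pos)
  finally show "(\<integral>\<^sup>+ y. ennreal (\<bar>Gker a \<sigma> x y t\<bar> powr \<alpha>) \<partial>lborel) < \<infinity>" .
qed

end
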